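(* Let $m\in\mathbb N$ and $\eta\in\mathrm{Sqz}^m$. Let $\vec a$ be the column $(\hat a_1,\dots,\hat a_m,\hat a_1^*,\dots,\hat a_m^* )^t$ of operators on $\mathcal H^{\otimes m}$. Then $[\vec a,\hat s_\eta]=\eta\vec a$, meaning that for each $p\in\{1,\dots,2m\}$, \[(\vec a)_p\hat s_\eta-\hat s_\eta(\vec a)_p=\sum_{q=1}^{2m}\eta_{p,q}(\vec a)_q.\]
   Context: $\mathcal H=L^2(\mathbb R)$ and $\hat a=(\hat q+i\hat p)/\sqrt2$, with $(\hat qf)(x)=xf(x)$ and $(\hat pf)(x)=-if'(x)$, so that $[\hat a,\hat a^*]=\hat I$. On $\mathcal H^{\otimes m}$, $\hat a_i$ is $\hat a$ on factor $i$. $\mathrm{Sqz}^m$ is the set of matrices $\eta=\begin{pmatrix}A&S\\ \bar S&\bar A\end{pmatrix}$ with $A\in\mathbb C^{m\times m}$ anti-hermitian and $S\in\mathbb C^{m\times m}$ symmetric. Set \[\hat s_\eta=\sum_{i,j}\Big(A_{i,j}\hat a_i^*\hat a_j+\tfrac12S_{i,j}\hat a_i^*\hat a_j^*-\tfrac12\bar S_{i,j}\hat a_i\hat a_j\Big).\] *)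

theory Defs
  imports "HOL-Analysis.Analysis"
begin

text \<open>Model of H^{\<otimes>m} = L^2(R)^{\<otimes>m} = L^2(R^m): wave functions f :: real^'m \<Rightarrow> complex,
  factor i of the tensor product corresponds to coordinate i.  The operators are
  realised as differential operators acting on smooth functions (a common invariant core).\<close>

definition partial :: "'m::finite \<Rightarrow> (real^'m \<Rightarrow> complex) \<Rightarrow> real^'m \<Rightarrow> complex" where
  "partial i f x = vector_derivative (\<lambda>t. f (x + t *\<^sub>R axis i 1)) (at 0)"

fun iter_partial :: "'m::finite list \<Rightarrow> (real^'m \<Rightarrow> complex) \<Rightarrow> real^'m \<Rightarrow> complex" where
  "iter_partial [] f = f"
| "iter_partial (i # is) f = partial i (iter_partial is f)"

definition smooth_fun :: "(real^'m::finite \<Rightarrow> complex) \<Rightarrow> bool" where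
  "smooth_fun f \<longleftrightarrow> (\<forall>is x. iter_partial is f differentiable (at x))"

definition q_op :: "'m::finite \<Rightarrow> (real^'m \<Rightarrow> complex) \<Rightarrow> real^'m \<Rightarrow> complex" where
  "q_op i f = (\<lambda>x. complex_of_real (x $ i) * f x)"

definition p_op :: "'m::finite \<Rightarrow> (real^'m \<Rightarrow> complex) \<Rightarrow> real^'m \<Rightarrow> complex" where
  "p_op i f = (\<lambda>x. - \<i> * partial i f x)"

definition a_op :: "'m::finite \<Rightarrow> (real^'m \<Rightarrow> complex) \<Rightarrow> real^'m \<Rightarrow> complex" where
  "a_op i f = (\<lambda>x. (q_op i f x + \<i> * p_op i f x) / complex_of_real (sqrt 2))"

definition a_adj :: "'m::finite \<Rightarrow> (real^'m \<Rightarrow> complex) \<Rightarrow> real^'m \<Rightarrow> complex" where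
  "a_adj i f = (\<lambda>x. (q_op i f x - \<i> * p_op i f x) / complex_of_real (sqrt 2))"

text \<open>2m x 2m matrices indexed by 'm + 'm: Inl i is the i-th of the first m indices,
  Inr i the i-th of the last m indices.\<close>
definition sqz_block :: "('m \<Rightarrow> 'm \<Rightarrow> complex) \<Rightarrow> ('m \<Rightarrow> 'm \<Rightarrow> complex) \<Rightarrow> ('m + 'm) \<Rightarrow> ('m + 'm) \<Rightarrow> complex" where
  "sqz_block A S p q = (case (p, q) of
      (Inl i, Inl j) \<Rightarrow> A i j
    | (Inl i, Inr j) \<Rightarrow> S i j
    | (Inr i, Inl j) \<Rightarrow> cnj (S i j)
    | (Inr i, Inr j) \<Rightarrow> cnj (A i j))"

definition Sqz :: "(('m::finite + 'm) \<Rightarrow> ('m + 'm) \<Rightarrow> complex) set" where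
  "Sqz = {sqz_block A S | A S. (\<forall>i j. A i j = - cnj (A j i)) \<and> (\<forall>i j. S i j = S j i)}"

definition s_op :: "(('m::finite + 'm) \<Rightarrow> ('m + 'm) \<Rightarrow> complex) \<Rightarrow> (real^'m \<Rightarrow> complex) \<Rightarrow> real^'m \<Rightarrow> complex" where
  "s_op \<eta> f = (\<lambda>x. \<Sum>i\<in>UNIV. \<Sum>j\<in>UNIV.
       \<eta> (Inl i) (Inl j) * a_adj i (a_op j f) x
     + (1/2) * \<eta> (Inl i) (Inr j) * a_adj i (a_adj j f) x
     - (1/2) * cnj (\<eta> (Inl i) (Inr j)) * a_op i (a_op j f) x)"

definition avec :: "('m::finite + 'm) \<Rightarrow> (real^'m \<Rightarrow> complex) \<Rightarrow> real^'m \<Rightarrow> complex" where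
  "avec p = (case p of Inl i \<Rightarrow> a_op i | Inr i \<Rightarrow> a_adj i)"

end

(*
  Write a_k and a_k^* as the ladder operators (x_k + c \<partial>_k)/\<surd>2 with c = 1 and c = -1.
  On smooth functions two ladder operators satisfy [L_c,k, L_d,i] = (c - d)/2 \<delta>_ki, which
  rests on the symmetry of second partial derivatives; we obtain the latter from the
  differentiability of the first partials by comparing the limits of a symmetric second
  difference quotient.  Since s_\<eta> is quadratic in ladder operators, the Leibniz rule
  [L, XY] = [L, X] Y + X [L, Y] makes [L, s_\<eta>] a linear combination of ladder operators, and the
  symmetry of S and anti-hermiticity of A identify its coefficients with a row of \<eta>.
*)
theory Submission
  imports Defs
begin

lemma has_vector_derivative_along_line:
  assumes "(g has_derivative G) (at (y + s *\<^sub>R u))"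
  shows "((\<lambda>t. g (y + t *\<^sub>R u)) has_vector_derivative G u) (at s)"
proof -
  have "((\<lambda>t. g (y + t *\<^sub>R u)) has_derivative (\<lambda>t. G (t *\<^sub>R u))) (at s)"
    by (rule has_derivative_compose[of "\<lambda>t. y + t *\<^sub>R u", OF _ assms])
      (auto intro!: derivative_eq_intros)
  then show ?thesis
    using linear_scale[OF has_derivative_linear[OF assms]] by (simp add: has_vector_derivative_def)
qed

lemma partial_eq_derivative:
  assumes "(g has_derivative G) (at x)"
  shows "partial i g x = G (axis i 1)"
  unfolding partial_def
  by (rule vector_derivative_at, rule has_vector_derivative_along_line) (use assms in simp)

lemma has_vector_derivative_partial:
  assumes "\<And>z. g differentiable (at z)"
  shows "((\<lambda>t. g (y + t *\<^sub>R axis i 1)) has_vector_derivative partial i g (y + s *\<^sub>R axis i 1)) (at s)"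
proof -
  obtain G where G: "(g has_derivative G) (at (y + s *\<^sub>R axis i 1))"
    using assms unfolding differentiable_def by blast
  show ?thesis using has_vector_derivative_along_line[OF G] partial_eq_derivative[OF G] by simp
qed

lemma partial_add:
  assumes "u differentiable (at x)" "v differentiable (at x)"
  shows "partial i (\<lambda>y. u y + v y) x = partial i u x + partial i v x"
proof -
  obtain U V where "(u has_derivative U) (at x)" "(v has_derivative V) (at x)"
    using assms by (auto simp: differentiable_def)
  then show ?thesis
    using partial_eq_derivative[OF has_derivative_add] by (simp add: partial_eq_derivative)
qed

lemma partial_diff:
  assumes "u differentiable (at x)" "v differentiable (at x)"
  shows "partial i (\<lambda>y. u y - v y) x = partial i u x - partial i v x"
proof -
  obtain U V where "(u has_derivative U) (at x)" "(v has_derivative V) (at x)"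
    using assms by (auto simp: differentiable_def)
  then show ?thesis
    using partial_eq_derivative[OF has_derivative_diff] by (simp add: partial_eq_derivative)
qed

lemma partial_mult_left:
  assumes "u differentiable (at x)"
  shows "partial i (\<lambda>y. c * u y) x = c * partial i u x"
proof -
  obtain U where U: "(u has_derivative U) (at x)"
    using assms by (auto simp: differentiable_def)
  have "((\<lambda>y. c * u y) has_derivative (\<lambda>h. c * U h)) (at x)"
    using U by (auto intro!: derivative_eq_intros)
  then show ?thesis
    using partial_eq_derivative[OF U] by (simp add: partial_eq_derivative)
qed

lemma partial_sum:
  assumes "finite I" "\<And>n. n \<in> I \<Longrightarrow> F n differentiable (at x)"
  shows "partial i (\<lambda>y. \<Sum>n\<in>I. F n y) x = (\<Sum>n\<in>I. partial i (F n) x)"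
proof -
  obtain D where D: "\<And>n. n \<in> I \<Longrightarrow> (F n has_derivative D n) (at x)"
    using assms(2) unfolding differentiable_def by metis
  have "((\<lambda>y. \<Sum>n\<in>I. F n y) has_derivative (\<lambda>h. \<Sum>n\<in>I. D n h)) (at x)"
    using D by (rule has_derivative_sum)
  then have "partial i (\<lambda>y. \<Sum>n\<in>I. F n y) x = (\<Sum>n\<in>I. D n (axis i 1))"
    by (rule partial_eq_derivative)
  also have "\<dots> = (\<Sum>n\<in>I. partial i (F n) x)"
    using D by (intro sum.cong refl) (simp add: partial_eq_derivative[OF D])
  finally show ?thesis .
qed

lemma has_derivative_coordinate:
  "((\<lambda>y. of_real (y $ k)) has_derivative (\<lambda>h. of_real (h $ k))) (at x)"
  by (intro has_derivative_of_real bounded_linear_imp_has_derivative bounded_linear_vec_nth)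

lemma partial_coordinate_mult:
  assumes "u differentiable (at x)"
  shows "partial i (\<lambda>y. of_real (y $ k) * u y) x
       = (if i = k then u x else 0) + of_real (x $ k) * partial i u x"
proof -
  obtain U where U: "(u has_derivative U) (at x)"
    using assms by (auto simp: differentiable_def)
  have "((\<lambda>y. of_real (y $ k) * u y) has_derivative (\<lambda>h. of_real (x $ k) * U h + of_real (h $ k) * u x)) (at x)"
    by (rule has_derivative_mult[OF has_derivative_coordinate U])
  then show ?thesis
    using partial_eq_derivative[OF U, of i] by (simp add: partial_eq_derivative axis_def)
qed

lemma differentiable_coordinate_mult:
  fixes u :: "real^'m::finite \<Rightarrow> complex"
  shows "u differentiable (at x) \<Longrightarrow> (\<lambda>y. of_real (y $ k) * u y) differentiable (at x)"
  using differentiable_mult differentiableI[OF has_derivative_coordinate] by blast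

section \<open>Symmetry of second partial derivatives\<close>

definition second_difference ::
  "(real^'m::finite \<Rightarrow> complex) \<Rightarrow> real^'m \<Rightarrow> real^'m \<Rightarrow> real^'m \<Rightarrow> real \<Rightarrow> complex" where
  "second_difference g x v w h = g (x + h *\<^sub>R v + h *\<^sub>R w) - g (x + h *\<^sub>R v) - g (x + h *\<^sub>R w) + g x"

lemma second_difference_commute: "second_difference g x v w = second_difference g x w v"
  by (simp add: fun_eq_iff second_difference_def algebra_simps)

lemma second_difference_bound:
  fixes g :: "real^'m::finite \<Rightarrow> complex"
  assumes g: "\<And>z. g differentiable (at z)"
    and L: "linear L" and e: "0 \<le> e"
    and approx: "\<And>y. norm (y - x) < d \<Longrightarrow>
      norm (partial i g y - partial i g x - L (y - x)) \<le> e * norm (y - x)"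
    and h: "0 < h" "2 * h < d"
    and w: "norm w = 1"
  shows "norm (second_difference g x w (axis i 1) h - of_real (h * h) * L w) \<le> 3 * e * (h * h)"
proof -
  define u :: "real^'m" where "u = axis i 1"
  define P where "P = partial i g"
  \<comment> \<open>\<open>\<phi> h - \<phi> 0\<close> is the second difference minus \<open>h\<^sup>2 L w\<close>; the two values of
    \<open>\<partial>\<^sub>i g\<close> in \<open>\<phi>'\<close> differ by about \<open>h L w\<close> by linearizing at \<open>x\<close>.\<close>
  define \<phi> where "\<phi> t = g (x + h *\<^sub>R w + t *\<^sub>R u) - g (x + t *\<^sub>R u) - t *\<^sub>R (of_real h * L w)" for t
  define \<phi>' where "\<phi>' t = P (x + h *\<^sub>R w + t *\<^sub>R u) - P (x + t *\<^sub>R u) - of_real h * L w" for t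
  have \<phi>_deriv: "(\<phi> has_vector_derivative \<phi>' t) (at t)" for t
    unfolding \<phi>_def \<phi>'_def P_def u_def
    by (intro has_vector_derivative_diff has_vector_derivative_partial g)
      (simp add: has_vector_derivative_def bounded_linear_imp_has_derivative bounded_linear_scaleR_left)
  have \<phi>'_bound: "norm (\<phi>' t) \<le> 3 * (e * h)" if t: "0 \<le> t" "t \<le> h" for t
  proof -
    have "norm (h *\<^sub>R w + t *\<^sub>R u) \<le> h + t"
      using norm_triangle_ineq[of "h *\<^sub>R w" "t *\<^sub>R u"] w h t by (simp add: u_def)
    then have "norm (P (x + h *\<^sub>R w + t *\<^sub>R u) - P x - L (h *\<^sub>R w + t *\<^sub>R u)) \<le> e * (h + t)"
      using approx[of "x + h *\<^sub>R w + t *\<^sub>R u"] h t e unfolding P_def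
      by (simp add: add.assoc) (meson mult_left_mono order_trans)
    moreover have "norm (P (x + t *\<^sub>R u) - P x - L (t *\<^sub>R u)) \<le> e * t"
      using approx[of "x + t *\<^sub>R u"] h t unfolding P_def by (simp add: u_def)
    moreover have "\<phi>' t = (P (x + h *\<^sub>R w + t *\<^sub>R u) - P x - L (h *\<^sub>R w + t *\<^sub>R u))
                 - (P (x + t *\<^sub>R u) - P x - L (t *\<^sub>R u))"
      unfolding \<phi>'_def linear_add[OF L] linear_scale[OF L] by (simp add: scaleR_conv_of_real)
    moreover have "e * (h + t) + e * t \<le> 3 * (e * h)"
      using e t by (simp add: distrib_left mult_left_mono)
    ultimately show ?thesis
      using norm_triangle_ineq4 by (smt (verit))
  qed
  have "norm (\<phi> h - \<phi> 0) \<le> 3 * (e * h) * h - 3 * (e * h) * 0"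
  proof (rule differentiable_bound_general[where \<phi> = "\<lambda>t. 3 * (e * h) * t" and \<phi>' = "\<lambda>_. 3 * (e * h)"])
    show "continuous_on {0..h} \<phi>"
      using \<phi>_deriv by (intro continuous_at_imp_continuous_on ballI has_vector_derivative_continuous)
    show "continuous_on {0..h} (\<lambda>t. 3 * (e * h) * t)"
      by (intro continuous_intros)
    show "((\<lambda>t. 3 * (e * h) * t) has_vector_derivative 3 * (e * h)) (at t)" for t
      unfolding has_real_derivative_iff_has_vector_derivative[symmetric]
      using DERIV_cmult_right[OF DERIV_ident] by simp
    show "norm (\<phi>' t) \<le> 3 * (e * h)" if "0 < t" "t < h" for t
      using \<phi>'_bound that by simp
  qed (use h \<phi>_deriv in simp_all)
  moreover have "\<phi> h - \<phi> 0 = second_difference g x w (axis i 1) h - of_real (h * h) * L w"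
  proof -
    have "h *\<^sub>R (of_real h * L w) = of_real (h * h) * L w"
      by (simp add: scaleR_conv_of_real)
    then show ?thesis
      unfolding \<phi>_def second_difference_def u_def by (simp add: diff_add_eq diff_diff_eq2)
  qed
  ultimately show ?thesis by (simp add: mult.assoc)
qed

lemma second_difference_tendsto:
  fixes g :: "real^'m::finite \<Rightarrow> complex"
  assumes g: "\<And>z. g differentiable (at z)"
    and L: "(partial i g has_derivative L) (at x)"
    and w: "norm w = 1"
  shows "((\<lambda>h. second_difference g x w (axis i 1) h / of_real (h * h)) \<longlongrightarrow> L w) (at_right 0)"
proof (rule tendstoI)
  fix \<epsilon> :: real
  assume "0 < \<epsilon>"
  then have "0 < \<epsilon> / 6" by simp
  then obtain d where d: "0 < d" and approx: "\<And>y. norm (y - x) < d \<Longrightarrow>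
      norm (partial i g y - partial i g x - L (y - x)) \<le> \<epsilon> / 6 * norm (y - x)"
    using L unfolding has_derivative_at_alt by blast
  have "dist (second_difference g x w (axis i 1) h / of_real (h * h)) (L w) < \<epsilon>"
    if h: "0 < h" "h < d / 2" for h
  proof -
    define D where "D = second_difference g x w (axis i 1) h"
    have "D / of_real (h * h) - L w = (D - of_real (h * h) * L w) / of_real (h * h)"
      using h by (simp add: field_simps)
    then have "dist (D / of_real (h * h)) (L w) = norm (D - of_real (h * h) * L w) / (h * h)"
      using h by (simp add: dist_norm norm_divide del: of_real_mult)
    moreover have "norm (D - of_real (h * h) * L w) \<le> 3 * (\<epsilon> / 6) * (h * h)"
      unfolding D_def using \<open>0 < \<epsilon>\<close> h
      by (intro second_difference_bound[OF g has_derivative_linear[OF L] _ approx _ _ w]) auto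
    ultimately have "dist (D / of_real (h * h)) (L w) \<le> \<epsilon> / 2"
      using h by (simp add: divide_le_eq)
    then show ?thesis using \<open>0 < \<epsilon>\<close> by (simp add: D_def)
  qed
  then show "\<forall>\<^sub>F h in at_right 0.
      dist (second_difference g x w (axis i 1) h / of_real (h * h)) (L w) < \<epsilon>"
    unfolding eventually_at_right_field using d by (intro exI[of _ "d / 2"]) auto
qed

lemma partial_commute:
  fixes g :: "real^'m::finite \<Rightarrow> complex"
  assumes g: "\<And>z. g differentiable (at z)"
    and "partial i g differentiable (at x)" "partial j g differentiable (at x)"
  shows "partial j (partial i g) x = partial i (partial j g) x"
proof -
  obtain Li Lj where Li: "(partial i g has_derivative Li) (at x)"
    and Lj: "(partial j g has_derivative Lj) (at x)"
    using assms(2,3) unfolding differentiable_def by blast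
  have "((\<lambda>h. second_difference g x (axis j 1) (axis i 1) h / of_real (h * h)) \<longlongrightarrow> Li (axis j 1))
      (at_right 0)"
    by (rule second_difference_tendsto[OF g Li norm_axis_1])
  moreover have "((\<lambda>h. second_difference g x (axis j 1) (axis i 1) h / of_real (h * h)) \<longlongrightarrow> Lj (axis i 1))
      (at_right 0)"
    using second_difference_tendsto[OF g Lj norm_axis_1] by (simp add: second_difference_commute)
  ultimately have "Li (axis j 1) = Lj (axis i 1)"
    by (rule tendsto_unique[OF trivial_limit_at_right_real])
  then show ?thesis
    using partial_eq_derivative[OF Li] partial_eq_derivative[OF Lj] by simp
qed

text \<open>Closedness of \<^const>\<open>smooth_fun\<close> under multiplication by a coordinate is not
  directly accessible, since iterated partials of such a product are no longer products of this
  form. Instead we close a set of smooth functions under the algebraic operations and all iterated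
  partials: the closure is stable under \<^const>\<open>partial\<close> and consists of differentiable
  functions, hence of smooth ones.\<close>

inductive_set smooth_closure :: "(real^'m::finite \<Rightarrow> complex) set \<Rightarrow> (real^'m \<Rightarrow> complex) set"
  for G where
  iter_partial: "g \<in> G \<Longrightarrow> iter_partial is g \<in> smooth_closure G"
| add: "u \<in> smooth_closure G \<Longrightarrow> v \<in> smooth_closure G \<Longrightarrow> (\<lambda>x. u x + v x) \<in> smooth_closure G"
| mult_left: "u \<in> smooth_closure G \<Longrightarrow> (\<lambda>x. c * u x) \<in> smooth_closure G"
| coordinate_mult: "u \<in> smooth_closure G \<Longrightarrow> (\<lambda>x. of_real (x $ k) * u x) \<in> smooth_closure G"

lemma smooth_closure_base: "g \<in> G \<Longrightarrow> g \<in> smooth_closure G"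
  using smooth_closure.iter_partial[of g G "[]"] by simp

lemma smooth_closure_differentiable:
  assumes "\<forall>g\<in>G. smooth_fun g" and "u \<in> smooth_closure G"
  shows "u differentiable (at x)"
  using assms(2)
proof (induction arbitrary: x)
  case (iter_partial g "is")
  then show ?case using assms(1) unfolding smooth_fun_def by blast
qed (simp_all add: differentiable_coordinate_mult)

lemma smooth_closure_partial:
  assumes G: "\<forall>g\<in>G. smooth_fun g" and "u \<in> smooth_closure G"
  shows "partial i u \<in> smooth_closure G"
  using assms(2)
proof induction
  case (iter_partial g "is")
  then show ?case using smooth_closure.iter_partial[of g G "i # is"] by simp
next
  case (add u v)
  have "partial i (\<lambda>x. u x + v x) = (\<lambda>x. partial i u x + partial i v x)"
    using add.hyps by (simp add: fun_eq_iff partial_add smooth_closure_differentiable[OF G])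
  then show ?case using add.IH by (simp add: smooth_closure.add)
next
  case (mult_left u c)
  have "partial i (\<lambda>x. c * u x) = (\<lambda>x. c * partial i u x)"
    using mult_left.hyps by (simp add: fun_eq_iff partial_mult_left smooth_closure_differentiable[OF G])
  then show ?case using mult_left.IH by (simp add: smooth_closure.mult_left)
next
  case (coordinate_mult u k)
  have "partial i (\<lambda>x. of_real (x $ k) * u x)
     = (\<lambda>x. (if i = k then 1 else 0) * u x + of_real (x $ k) * partial i u x)"
    using coordinate_mult.hyps
    by (simp add: fun_eq_iff partial_coordinate_mult smooth_closure_differentiable[OF G])
  then show ?case
    using coordinate_mult by (simp add: smooth_closure.add smooth_closure.mult_left smooth_closure.coordinate_mult)
qed

lemma smooth_closure_smooth:
  assumes G: "\<forall>g\<in>G. smooth_fun g" and "u \<in> smooth_closure G"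
  shows "smooth_fun u"
proof -
  have "iter_partial is u \<in> smooth_closure G" for "is"
    by (induction "is") (simp_all add: assms smooth_closure_partial)
  then show ?thesis
    unfolding smooth_fun_def using smooth_closure_differentiable[OF G] by blast
qed

lemma smooth_fun_differentiable: "smooth_fun u \<Longrightarrow> u differentiable (at x)"
  unfolding smooth_fun_def by (metis iter_partial.simps(1))

lemma smooth_fun_add: "smooth_fun u \<Longrightarrow> smooth_fun v \<Longrightarrow> smooth_fun (\<lambda>x. u x + v x)"
  by (rule smooth_closure_smooth[of "{u, v}"])
    (auto intro: smooth_closure.add smooth_closure_base)

lemma smooth_fun_mult_left: "smooth_fun u \<Longrightarrow> smooth_fun (\<lambda>x. c * u x)"
  by (rule smooth_closure_smooth[of "{u}"]) (auto intro: smooth_closure.mult_left smooth_closure_base)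

lemma smooth_fun_coordinate_mult: "smooth_fun u \<Longrightarrow> smooth_fun (\<lambda>x. of_real (x $ k) * u x)"
  by (rule smooth_closure_smooth[of "{u}"]) (auto intro: smooth_closure.coordinate_mult smooth_closure_base)

lemma smooth_fun_partial: "smooth_fun u \<Longrightarrow> smooth_fun (partial i u)"
  by (rule smooth_closure_smooth[of "{u}"]) (auto intro: smooth_closure_partial smooth_closure_base)

section \<open>Ladder operators\<close>

definition ladder :: "complex \<Rightarrow> 'm::finite \<Rightarrow> (real^'m \<Rightarrow> complex) \<Rightarrow> real^'m \<Rightarrow> complex" where
  "ladder c k g = (\<lambda>x. (of_real (x $ k) * g x + c * partial k g x) / of_real (sqrt 2))"

lemma a_op_eq_ladder: "a_op k = ladder 1 k"
  by (simp add: fun_eq_iff a_op_def q_op_def p_op_def ladder_def)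

lemma a_adj_eq_ladder: "a_adj k = ladder (-1) k"
  by (simp add: fun_eq_iff a_adj_def q_op_def p_op_def ladder_def)

lemma smooth_fun_ladder: "smooth_fun g \<Longrightarrow> smooth_fun (ladder c k g)"
proof -
  assume "smooth_fun g"
  moreover have "ladder c k g
      = (\<lambda>x. inverse (of_real (sqrt 2)) * (of_real (x $ k) * g x + c * partial k g x))"
    by (simp add: fun_eq_iff ladder_def field_simps)
  ultimately show ?thesis
    by (simp add: smooth_fun_mult_left smooth_fun_add smooth_fun_coordinate_mult smooth_fun_partial)
qed

lemma ladder_add:
  assumes "u differentiable (at x)" "v differentiable (at x)"
  shows "ladder c k (\<lambda>y. u y + v y) x = ladder c k u x + ladder c k v x"
  using assms by (simp add: ladder_def partial_add field_simps)

lemma ladder_diff: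
  assumes "u differentiable (at x)" "v differentiable (at x)"
  shows "ladder c k (\<lambda>y. u y - v y) x = ladder c k u x - ladder c k v x"
  using assms by (simp add: ladder_def partial_diff field_simps)

lemma ladder_mult_left:
  assumes "u differentiable (at x)"
  shows "ladder c k (\<lambda>y. a * u y) x = a * ladder c k u x"
  using assms by (simp add: ladder_def partial_mult_left algebra_simps)

lemma ladder_sum:
  assumes "finite I" "\<And>n. n \<in> I \<Longrightarrow> F n differentiable (at x)"
  shows "ladder c k (\<lambda>y. \<Sum>n\<in>I. F n y) x = (\<Sum>n\<in>I. ladder c k (F n) x)"
  using assms by (simp add: ladder_def partial_sum sum_distrib_left flip: sum.distrib sum_divide_distrib)

lemma partial_ladder:
  assumes g: "g differentiable (at x)" and dg: "partial k g differentiable (at x)"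
  shows "partial i (ladder c k g) x
    = ((if i = k then g x else 0) + of_real (x $ k) * partial i g x + c * partial i (partial k g) x)
      / of_real (sqrt 2)"
proof -
  have d1: "(\<lambda>y. of_real (y $ k) * g y) differentiable (at x)"
    using g by (rule differentiable_coordinate_mult)
  have d2: "(\<lambda>y. c * partial k g y) differentiable (at x)"
    using differentiable_mult[OF differentiable_const dg] .
  have "ladder c k g = (\<lambda>y. inverse (of_real (sqrt 2)) * (of_real (y $ k) * g y + c * partial k g y))"
    by (simp add: fun_eq_iff ladder_def field_simps)
  then have "partial i (ladder c k g) x = inverse (of_real (sqrt 2))
      * (partial i (\<lambda>y. of_real (y $ k) * g y) x + partial i (\<lambda>y. c * partial k g y) x)"
    by (simp only: partial_mult_left[OF differentiable_add[OF d1 d2]] partial_add[OF d1 d2])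
  then show ?thesis
    unfolding partial_coordinate_mult[OF g] partial_mult_left[OF dg] by (simp add: divide_inverse mult.commute)
qed

lemma ladder_commutator:
  assumes g: "smooth_fun g"
  shows "ladder c k (ladder d i g) x - ladder d i (ladder c k g) x
       = (if k = i then (c - d) / 2 * g x else 0)"
proof -
  have "partial k (partial i g) x = partial i (partial k g) x"
    using g by (intro partial_commute smooth_fun_differentiable smooth_fun_partial)
  moreover have "of_real (sqrt 2) * of_real (sqrt 2) = (2 :: complex)"
    by (simp flip: of_real_mult)
  ultimately show ?thesis
    using g unfolding ladder_def[of _ _ "ladder _ _ g"]
    by (simp add: partial_ladder smooth_fun_differentiable smooth_fun_partial)
      (simp add: ladder_def field_simps)
qed

lemma ladder_commutator_product:
  assumes f: "smooth_fun f"
  shows "ladder c k (ladder d i (ladder e j f)) x - ladder d i (ladder e j (ladder c k f)) x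
       = (if k = i then (c - d) / 2 * ladder e j f x else 0)
         + (if k = j then (c - e) / 2 * ladder d i f x else 0)"
proof -
  have "(\<lambda>y. ladder c k (ladder e j f) y - ladder e j (ladder c k f) y)
      = (\<lambda>y. (if k = j then (c - e) / 2 else 0) * f y)"
    using f by (simp add: fun_eq_iff ladder_commutator)
  then have "ladder d i (ladder c k (ladder e j f)) x - ladder d i (ladder e j (ladder c k f)) x
      = (if k = j then (c - e) / 2 else 0) * ladder d i f x"
    using f by (simp add: smooth_fun_differentiable smooth_fun_ladder flip: ladder_diff ladder_mult_left)
  moreover have "ladder c k (ladder d i (ladder e j f)) x - ladder d i (ladder c k (ladder e j f)) x
      = (if k = i then (c - d) / 2 * ladder e j f x else 0)"
    using f by (simp add: ladder_commutator smooth_fun_ladder)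
  ultimately show ?thesis by (simp add: algebra_simps)
qed

section \<open>The commutator with the squeezing generator\<close>

lemma ladder_s_op:
  assumes f: "smooth_fun f"
  shows "ladder c k (s_op \<eta> f) x = (\<Sum>i\<in>UNIV. \<Sum>j\<in>UNIV.
       \<eta> (Inl i) (Inl j) * ladder c k (ladder (-1) i (ladder 1 j f)) x
     + 1/2 * \<eta> (Inl i) (Inr j) * ladder c k (ladder (-1) i (ladder (-1) j f)) x
     - 1/2 * cnj (\<eta> (Inl i) (Inr j)) * ladder c k (ladder 1 i (ladder 1 j f)) x)"
proof -
  define T where "T i j y = \<eta> (Inl i) (Inl j) * ladder (-1) i (ladder 1 j f) y
     + 1/2 * \<eta> (Inl i) (Inr j) * ladder (-1) i (ladder (-1) j f) y
     - 1/2 * cnj (\<eta> (Inl i) (Inr j)) * ladder 1 i (ladder 1 j f) y" for i j y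
  have d: "ladder a i (ladder b j f) differentiable (at y)" for a b i j y
    using f by (intro smooth_fun_differentiable smooth_fun_ladder)
  have dT: "T i j differentiable (at y)" for i j y
    unfolding T_def by (intro differentiable_add differentiable_diff differentiable_mult differentiable_const d)
  have "ladder c k (T i j) x
     = \<eta> (Inl i) (Inl j) * ladder c k (ladder (-1) i (ladder 1 j f)) x
     + 1/2 * \<eta> (Inl i) (Inr j) * ladder c k (ladder (-1) i (ladder (-1) j f)) x
     - 1/2 * cnj (\<eta> (Inl i) (Inr j)) * ladder c k (ladder 1 i (ladder 1 j f)) x" for i j
    unfolding T_def
    by (simp only: ladder_add ladder_diff ladder_mult_left d differentiable_add differentiable_mult
        differentiable_const)
  moreover have "s_op \<eta> f = (\<lambda>y. \<Sum>i\<in>UNIV. \<Sum>j\<in>UNIV. T i j y)"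
    by (simp add: fun_eq_iff s_op_def T_def a_op_eq_ladder a_adj_eq_ladder)
  ultimately show ?thesis
    using dT by (simp add: ladder_sum differentiable_sum)
qed

lemma sum_sum_delta:
  fixes X Y :: "'a::finite \<Rightarrow> 'a \<Rightarrow> 'b::comm_monoid_add"
  shows "(\<Sum>i\<in>UNIV. \<Sum>j\<in>UNIV. (if k = i then X i j else 0) + (if k = j then Y i j else 0))
       = (\<Sum>j\<in>UNIV. X k j) + (\<Sum>i\<in>UNIV. Y i k)"
proof -
  have "(\<Sum>i\<in>UNIV. \<Sum>j\<in>UNIV. if k = i then X i j else 0) = (\<Sum>j\<in>UNIV. X k j)"
    by (subst sum.swap) (simp add: sum.delta')
  moreover have "(\<Sum>i\<in>UNIV. \<Sum>j\<in>UNIV. if k = j then Y i j else 0) = (\<Sum>i\<in>UNIV. Y i k)"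
    by (simp add: sum.delta')
  ultimately show ?thesis by (simp add: sum.distrib)
qed

lemma ladder_commutator_s_op:
  assumes f: "smooth_fun f" and S: "\<And>i j. S i j = S j i"
  shows "ladder c k (s_op (sqz_block A S) f) x - s_op (sqz_block A S) (ladder c k f) x
    = (\<Sum>j\<in>UNIV. (c + 1) / 2 * (A k j * ladder 1 j f x + S k j * ladder (-1) j f x)
          + (c - 1) / 2 * (A j k * ladder (-1) j f x - cnj (S k j) * ladder 1 j f x))"
    (is "_ = ?rhs")
proof -
  have "ladder c k (s_op (sqz_block A S) f) x - s_op (sqz_block A S) (ladder c k f) x
    = (\<Sum>i\<in>UNIV. \<Sum>j\<in>UNIV.
        A i j * (ladder c k (ladder (-1) i (ladder 1 j f)) x
                 - ladder (-1) i (ladder 1 j (ladder c k f)) x)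
      + S i j / 2 * (ladder c k (ladder (-1) i (ladder (-1) j f)) x
                     - ladder (-1) i (ladder (-1) j (ladder c k f)) x)
      - cnj (S i j) / 2 * (ladder c k (ladder 1 i (ladder 1 j f)) x
                           - ladder 1 i (ladder 1 j (ladder c k f)) x))"
    unfolding ladder_s_op[OF f] unfolding s_op_def a_op_eq_ladder a_adj_eq_ladder
    by (simp only: sum_subtractf[symmetric])
      (intro sum.cong refl; simp add: sqz_block_def algebra_simps)
  also have "\<dots> = (\<Sum>i\<in>UNIV. \<Sum>j\<in>UNIV.
        A i j * ((if k = i then (c + 1) / 2 * ladder 1 j f x else 0)
               + (if k = j then (c - 1) / 2 * ladder (-1) i f x else 0))
      + S i j / 2 * ((if k = i then (c + 1) / 2 * ladder (-1) j f x else 0)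
                   + (if k = j then (c + 1) / 2 * ladder (-1) i f x else 0))
      - cnj (S i j) / 2 * ((if k = i then (c - 1) / 2 * ladder 1 j f x else 0)
                         + (if k = j then (c - 1) / 2 * ladder 1 i f x else 0)))"
    by (simp only: ladder_commutator_product[OF f] diff_minus_eq_add)
  also have "\<dots> = (\<Sum>i\<in>UNIV. \<Sum>j\<in>UNIV.
        (if k = i then (c + 1) / 2 * (A i j * ladder 1 j f x + S i j / 2 * ladder (-1) j f x)
                       - (c - 1) / 2 * (cnj (S i j) / 2 * ladder 1 j f x) else 0)
      + (if k = j then (c - 1) / 2 * (A i j * ladder (-1) i f x - cnj (S i j) / 2 * ladder 1 i f x)
                       + (c + 1) / 2 * (S i j / 2 * ladder (-1) i f x) else 0))"
    by (intro sum.cong refl) (simp add: algebra_simps)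
  also have "\<dots> = ?rhs"
    unfolding sum_sum_delta
    by (simp add: S[of _ k] flip: sum.distrib) (intro sum.cong refl; simp add: field_simps)
  finally show ?thesis .
qed

lemma sum_UNIV_Plus:
  "(\<Sum>q\<in>UNIV. F q) = (\<Sum>i\<in>UNIV. F (Inl i)) + (\<Sum>i\<in>UNIV. F (Inr i))"
  for F :: "'a::finite + 'b::finite \<Rightarrow> 'c::comm_monoid_add"
  using sum.Plus[of "UNIV :: 'a set" "UNIV :: 'b set" F] by (simp add: comp_def)

theorem lemma1:
  fixes \<eta> :: "('m::finite + 'm) \<Rightarrow> ('m + 'm) \<Rightarrow> complex"
    and f :: "real^'m \<Rightarrow> complex"
    and p :: "'m + 'm"
  assumes "\<eta> \<in> Sqz"
    and "smooth_fun f"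
  shows "(\<lambda>x. avec p (s_op \<eta> f) x - s_op \<eta> (avec p f) x)
           = (\<lambda>x. \<Sum>q\<in>UNIV. \<eta> p q * avec q f x)"
proof
  fix x
  obtain A S where \<eta>: "\<eta> = sqz_block A S"
    and A: "\<And>i j. A i j = - cnj (A j i)" and S: "\<And>i j. S i j = S j i"
    using assms(1) unfolding Sqz_def by blast
  show "avec p (s_op \<eta> f) x - s_op \<eta> (avec p f) x = (\<Sum>q\<in>UNIV. \<eta> p q * avec q f x)"
  proof (cases p)
    case (Inl k)
    then show ?thesis
      using ladder_commutator_s_op[OF assms(2) S, where c = 1 and k = k and A = A and x = x]
      by (simp add: \<eta> avec_def a_op_eq_ladder a_adj_eq_ladder sum_UNIV_Plus sqz_block_def sum.distrib)
  next
    case (Inr k)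
    then show ?thesis
      using ladder_commutator_s_op[OF assms(2) S, where c = "-1" and k = k and A = A and x = x] A[of _ k]
      by (simp add: \<eta> avec_def a_op_eq_ladder a_adj_eq_ladder sum_UNIV_Plus sqz_block_def sum.distrib
          algebra_simps)
  qed
qed

end
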